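(* With $L_\infty$, $L_\infty^\pm$ and $d(n)$ as in the context, $$L_\infty=\tfrac1{n+1}L^+_\infty+O(\eta^{n+1})\ \text{ as }\eta=1-s\to0^+,\qquad L_\infty=\tfrac1{d(n)}L^-_\infty+O(s^{\frac{n+1}{n}})\ \text{ as }s\to0^+,$$ in the following sense: the zeroth-order coefficients agree, and each coefficient of $\partial^2$ and of $\partial$ of $L_\infty$ equals the corresponding coefficient of the model operator (written in the same variable) times $1+O(\epsilon)$, with $\epsilon=\eta^{n+1}$ resp. $\epsilon=s^{(n+1)/n}$.
   Context: Fix $n\ge2$ and let $c(n):=\int_0^\infty(e^\xi-1)^{-1/(n+1)}d\xi$, $d(n):=\big(\frac{n}{n+1}\big)^{1/n}c(n)^{\frac{n+1}{n}}$. Define $\Phi_\infty:(0,1)\to(0,\infty)$ by $\int_0^{\Phi_\infty(s)}(e^\xi-1)^{-1/(n+1)}d\xi=c(n)\,s$ (then $\Phi_\infty',\Phi_\infty''>0$), and define the ordinary differential operator on $(0,1)$ $$L_\infty u:=\frac{u''}{\Phi_\infty''}+(n-1)\frac{u'}{\Phi_\infty'}-u,$$ (primes are $d/ds$; this is the collapsed limit of $\Delta-\mathrm{Id}$ on radial functions on the neck). Write $\eta:=1-s$. Model operators: $L^+_\infty:=\eta^2\partial^2_{\eta\eta}-(n-1)\eta\partial_\eta-(n+1)\mathrm{Id}$ and $L^-_\infty:=n s^{\frac{n-1}{n}}\partial^2_{ss}+(n-1)s^{-\frac1n}\partial_s-d(n)\mathrm{Id}$. *)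

theory Defs
  imports "HOL-Analysis.Analysis" "HOL-Library.Landau_Symbols"
begin

definition kern :: "nat \<Rightarrow> real \<Rightarrow> real" where
  "kern n \<xi> = (exp \<xi> - 1) powr (- 1 / (real n + 1))"

definition c_const :: "nat \<Rightarrow> real" where
  "c_const n = integral {0<..} (kern n)"

definition d_const :: "nat \<Rightarrow> real" where
  "d_const n = (real n / (real n + 1)) powr (1 / real n)
               * c_const n powr ((real n + 1) / real n)"

definition Phi_inf :: "nat \<Rightarrow> real \<Rightarrow> real" where
  "Phi_inf n s = (THE x. 0 < x \<and> integral {0..x} (kern n) = c_const n * s)"

definition Linf :: "nat \<Rightarrow> (real \<Rightarrow> real) \<Rightarrow> real \<Rightarrow> real" where
  "Linf n u s = deriv (deriv u) s / deriv (deriv (Phi_inf n)) s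
              + (real n - 1) * deriv u s / deriv (Phi_inf n) s - u s"

definition Linf_c2 :: "nat \<Rightarrow> real \<Rightarrow> real" where
  "Linf_c2 n s = 1 / deriv (deriv (Phi_inf n)) s"
definition Linf_c1 :: "nat \<Rightarrow> real \<Rightarrow> real" where
  "Linf_c1 n s = (real n - 1) / deriv (Phi_inf n) s"
definition Linf_c0 :: "nat \<Rightarrow> real \<Rightarrow> real" where
  "Linf_c0 n s = -1"

text \<open>Model operator L^+ in the variable eta = 1 - s:
  eta^2 d^2/deta^2 - (n-1) eta d/deta - (n+1).\<close>
definition Lplus_c2 :: "nat \<Rightarrow> real \<Rightarrow> real" where
  "Lplus_c2 n \<eta> = \<eta>^2"
definition Lplus_c1 :: "nat \<Rightarrow> real \<Rightarrow> real" where
  "Lplus_c1 n \<eta> = - (real n - 1) * \<eta>"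
definition Lplus_c0 :: "nat \<Rightarrow> real \<Rightarrow> real" where
  "Lplus_c0 n \<eta> = - (real n + 1)"

definition Lminus_c2 :: "nat \<Rightarrow> real \<Rightarrow> real" where
  "Lminus_c2 n s = real n * s powr ((real n - 1) / real n)"
definition Lminus_c1 :: "nat \<Rightarrow> real \<Rightarrow> real" where
  "Lminus_c1 n s = (real n - 1) * s powr (- 1 / real n)"
definition Lminus_c0 :: "nat \<Rightarrow> real \<Rightarrow> real" where
  "Lminus_c0 n s = - d_const n"

end

theory Submission imports Defs begin

text \<open>Write \<open>a = 1/(n+1)\<close>, \<open>b = n/(n+1)\<close>, \<open>K \<xi> = (e^\<xi> - 1)^(-a)\<close> and \<open>x = \<Phi>(s)\<close>.
  Differentiating \<open>\<integral>\<^sub>0\<^sup>x K = c s\<close> gives \<open>\<Phi>' = c / K x\<close> and \<open>\<Phi>'' = c^2 a (e^x - 1)^(2a-1) e^x\<close>,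
  so all coefficients of \<open>L\<^sub>\<infinity>\<close> are explicit functions of \<open>x\<close>. As \<open>s \<rightarrow> 1\<close>, \<open>x \<rightarrow> \<infinity>\<close> and
  \<open>c (1 - s) = \<integral>\<^sub>x\<^sup>\<infinity> K = e^(-ax) (1 + O(e^(-x))) / a\<close>, whence \<open>e^(-x) = O((1 - s)^(n+1))\<close>;
  as \<open>s \<rightarrow> 0\<close>, \<open>x \<rightarrow> 0\<close> and \<open>c s = \<integral>\<^sub>0\<^sup>x K = x^b (1 + O(x)) / b\<close>, whence \<open>x = O(s^(1/b))\<close>.
  Substituting these expansions into the exact formulas yields the model coefficients up to
  factors \<open>1 + O(e^(-x))\<close> resp. \<open>1 + O(x)\<close>.\<close>

lemma abs_powr_sub_one_le:
  fixes r p :: real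
  assumes "0 < r" "0 \<le> p" "p \<le> 1"
  shows "\<bar>r powr p - 1\<bar> \<le> \<bar>r - 1\<bar>"
proof (cases "r \<le> 1")
  case True
  then have "r \<le> r powr p" "r powr p \<le> 1"
    using assms powr_mono'[of p 1 r] powr_mono'[of 0 p r] by auto
  then show ?thesis by linarith
next
  case False
  then have "1 \<le> r powr p" "r powr p \<le> r"
    using assms powr_mono[of p 1 r] powr_mono[of 0 p r] by auto
  then show ?thesis by linarith
qed

lemma abs_mult_sub_one_le:
  fixes x y t A B :: real
  assumes x: "\<bar>x - 1\<bar> \<le> A * t" and y: "\<bar>y - 1\<bar> \<le> B * t"
    and "0 \<le> A" "0 \<le> B" "0 \<le> t" "t \<le> 1"
  shows "\<bar>x * y - 1\<bar> \<le> (A + B + A * B) * t"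
proof -
  have "\<bar>(x - 1) * (y - 1)\<bar> \<le> (A * t) * (B * t)"
    unfolding abs_mult using assms by (intro mult_mono) auto
  also have "\<dots> \<le> A * B * t"
    using assms mult_left_mono[of t 1 "A * B * t"] by (simp add: algebra_simps)
  finally have "\<bar>(x - 1) * (y - 1)\<bar> \<le> A * B * t" .
  moreover have "x * y - 1 = (x - 1) * (y - 1) + (x - 1) + (y - 1)"
    by (simp add: algebra_simps)
  ultimately show ?thesis using x y by (simp add: algebra_simps)
qed

lemma abs_inverse_one_plus_sub_one_le:
  fixes t :: real
  assumes "0 \<le> t"
  shows "\<bar>1 / (1 + t) - 1\<bar> \<le> t"
proof -
  have "1 / (1 + t) - 1 = - (t / (1 + t))" using assms by (simp add: field_simps)
  moreover have "t / (1 + t) \<le> t" using assms by (simp add: divide_le_eq mult_le_cancel_left1)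
  ultimately show ?thesis using assms by simp
qed

lemma inverse_one_minus_le:
  fixes t :: real
  assumes "0 \<le> t" "t \<le> 1/2"
  shows "1 / (1 - t) \<le> 1 + 2 * t"
proof -
  have "1 \<le> (1 + 2 * t) * (1 - t)"
    using assms mult_nonneg_nonneg[of t "1 - 2 * t"] by (simp add: algebra_simps)
  then show ?thesis using assms by (subst divide_le_eq) auto
qed

lemma abs_inverse_one_minus_sub_one_le:
  fixes t :: real
  assumes "0 \<le> t" "t \<le> 1/2"
  shows "\<bar>1 / (1 - t) - 1\<bar> \<le> 2 * t"
  using inverse_one_minus_le[OF assms] assms by (simp add: field_simps)

lemma exp_minus_one_le_mult_exp: "exp x - 1 \<le> x * exp (x::real)"
proof -
  have "(1 - x) * exp x \<le> exp (- x) * exp x"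
    using exp_ge_add_one_self[of "- x"] by (intro mult_right_mono) auto
  then show ?thesis by (simp add: exp_minus field_simps)
qed

lemma exp_le_one_plus_double:
  fixes x :: real
  assumes "0 \<le> x" "x \<le> 1/2"
  shows "exp x \<le> 1 + 2 * x"
proof -
  have "(1 - x) * exp x \<le> 1"
    using exp_ge_add_one_self[of "- x"] mult_right_mono[of "1 - x" "exp (- x)" "exp x"]
    by (simp add: exp_minus)
  then have "exp x \<le> 1 / (1 - x)" using assms by (subst le_divide_eq) (auto simp: mult.commute)
  then show ?thesis using inverse_one_minus_le[OF assms] by linarith
qed

lemma abs_exp_minus_sub_one_le: "0 \<le> x \<Longrightarrow> \<bar>exp (- x) - 1\<bar> \<le> (x::real)"
  using exp_ge_add_one_self[of "- x"] by simp

lemma exp_minus_one_div_bounds: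
  fixes x :: real
  assumes "0 < x" "x \<le> 1/2"
  shows "1 \<le> (exp x - 1) / x" "(exp x - 1) / x \<le> 1 + 2 * x"
proof -
  have "x \<le> exp x - 1" using exp_ge_add_one_self[of x] by linarith
  moreover have "exp x - 1 \<le> x * (1 + 2 * x)"
    using exp_minus_one_le_mult_exp[of x] exp_le_one_plus_double[of x] assms
      mult_left_mono[of "exp x" "1 + 2 * x" x] by linarith
  ultimately show "1 \<le> (exp x - 1) / x" "(exp x - 1) / x \<le> 1 + 2 * x"
    using assms by (auto simp: field_simps)
qed

lemma exists_bigo_relative_error:
  fixes L M g :: "real \<Rightarrow> real"
  assumes "\<forall>\<^sub>F s in F. \<exists>r. L s = M s * (1 + r) \<and> \<bar>r\<bar> \<le> K * \<bar>g s\<bar>"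
  shows "\<exists>h. h \<in> O[F](g) \<and> (\<forall>\<^sub>F s in F. L s = M s * (1 + h s))"
proof -
  define h where "h s = (SOME r. L s = M s * (1 + r) \<and> \<bar>r\<bar> \<le> K * \<bar>g s\<bar>)" for s
  have h: "\<forall>\<^sub>F s in F. L s = M s * (1 + h s) \<and> \<bar>h s\<bar> \<le> K * \<bar>g s\<bar>"
    using assms by (rule eventually_mono) (unfold h_def, rule someI_ex)
  have "h \<in> O[F](g)"
    by (rule bigoI[where c = K]) (use h in \<open>auto elim!: eventually_mono\<close>)
  moreover have "\<forall>\<^sub>F s in F. L s = M s * (1 + h s)" using h by (rule eventually_mono) auto
  ultimately show ?thesis by blast
qed

locale neck_profile =
  fixes n :: nat
  assumes n_pos: "1 \<le> n"
begin

definition a :: real where "a = 1 / (real n + 1)"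
definition b :: real where "b = 1 - a"

abbreviation c :: real where "c \<equiv> c_const n"
abbreviation Phi :: "real \<Rightarrow> real" where "Phi \<equiv> Phi_inf n"

lemma a_pos: "0 < a" and a_le_half: "a \<le> 1/2" and a_less_1: "a < 1"
  and b_pos: "0 < b" and b_eq: "b = real n * a" and n_plus_1_mult_a: "(real n + 1) * a = 1"
  using n_pos by (auto simp: a_def b_def field_simps)

lemma kern_eq: "kern n x = (exp x - 1) powr (- a)"
  unfolding kern_def a_def by simp

lemma kern_pos: "0 < x \<Longrightarrow> 0 < kern n x"
  unfolding kern_eq by simp

lemma kern_nonneg: "0 \<le> kern n x"
  unfolding kern_eq by simp

lemma kern_0: "kern n 0 = 0"
  unfolding kern_eq by simp

lemma kern_continuous_on: "continuous_on {0<..} (kern n)"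
proof -
  have "continuous_on {0<..} (\<lambda>\<xi>::real. (exp \<xi> - 1) powr (- a))"
    by (intro continuous_intros) auto
  then show ?thesis unfolding kern_eq[abs_def] .
qed

lemma kern_le_powr: assumes "0 < x" shows "kern n x \<le> x powr (- a)"
proof -
  have "x \<le> exp x - 1" using exp_ge_add_one_self[of x] by linarith
  then show ?thesis unfolding kern_eq using assms a_pos by (intro powr_mono2') auto
qed

lemma powr_mult_one_minus_le_kern:
  assumes "0 < x" shows "x powr (- a) * (1 - a * x) \<le> kern n x"
proof -
  have "(x * exp x) powr (- a) \<le> (exp x - 1) powr (- a)"
    using exp_minus_one_le_mult_exp[of x] assms a_pos by (intro powr_mono2') auto
  moreover have "(x * exp x) powr (- a) = x powr (- a) * exp (- a * x)"
    using assms by (simp add: powr_mult powr_def ln_mult exp_add[symmetric] algebra_simps)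
  moreover have "1 - a * x \<le> exp (- a * x)" using exp_ge_add_one_self[of "- a * x"] by simp
  ultimately show ?thesis unfolding kern_eq
    by (smt (verit, best) mult_left_mono powr_ge_zero)
qed

lemma kern_tail_bounds:
  assumes "1 \<le> x"
  shows "exp (- a * x) \<le> kern n x" "kern n x \<le> exp (- a * x) * (1 + 2 * exp (- x))"
proof -
  define u where "u = exp (- x)"
  have "2 \<le> exp x" using exp_ge_add_one_self[of x] assms by linarith
  then have u: "0 < u" "u \<le> 1/2" unfolding u_def by (auto simp: exp_minus field_simps)
  have "exp x - 1 = exp x * (1 - u)" unfolding u_def by (simp add: exp_minus field_simps)
  then have "kern n x = exp x powr (- a) * (1 - u) powr (- a)"
    unfolding kern_eq using u by (simp add: powr_mult)
  moreover have "exp x powr (- a) = exp (- a * x)" by (simp add: powr_def)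
  ultimately have k: "kern n x = exp (- a * x) * (1 - u) powr (- a)" by simp
  have "1 \<le> (1 - u) powr (- a)"
    using u a_pos powr_mono'[of "- a" 0 "1 - u"] by auto
  then show "exp (- a * x) \<le> kern n x" unfolding k by simp
  have "(1 - u) powr (- a) \<le> (1 - u) powr (- 1)"
    using u a_less_1 by (intro powr_mono') auto
  also have "\<dots> \<le> 1 + 2 * u"
    using u inverse_one_minus_le[of u] by (simp add: powr_neg_one)
  finally show "kern n x \<le> exp (- a * x) * (1 + 2 * exp (- x))"
    unfolding k u_def by simp
qed

lemma kern_integrable_on_Icc: assumes "0 \<le> x" shows "kern n integrable_on {0..x}"
proof -
  have cont: "continuous_on {0<..x} (kern n)"
    using kern_continuous_on by (rule continuous_on_subset) auto
  have "kern n absolutely_integrable_on {0<..x}"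
  proof (rule measurable_bounded_by_integrable_imp_absolutely_integrable)
    show "kern n \<in> borel_measurable (lebesgue_on {0<..x})"
      by (rule continuous_imp_measurable_on_sets_lebesgue[OF cont]) auto
    show "(\<lambda>\<xi>. \<xi> powr (- a)) integrable_on {0<..x}"
      using a_less_1 assms by (intro integrable_on_powr_from_0') auto
    show "norm (kern n \<xi>) \<le> \<xi> powr (- a)" if "\<xi> \<in> {0<..x}" for \<xi>
      using kern_le_powr[of \<xi>] kern_nonneg[of \<xi>] that by auto
  qed auto
  then have "kern n integrable_on {0<..x}" by (simp add: absolutely_integrable_on_def)
  then show ?thesis
    by (rule integrable_spike_set) (auto simp: kern_0 intro: negligible_subset[of "{}"])
qed

lemma exp_minus_a_has_integral: "((\<lambda>\<xi>. exp (- a * \<xi>)) has_integral exp (- a * x) / a) {x..}"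
  using has_integral_exp_minus_to_infinity[of a x] a_pos by simp

lemma kern_integrable_on_tail: assumes "1 \<le> x" shows "kern n integrable_on {x..}"
proof -
  have cont: "continuous_on {x..} (kern n)"
    using kern_continuous_on by (rule continuous_on_subset) (use assms in auto)
  have "kern n absolutely_integrable_on {x..}"
  proof (rule measurable_bounded_by_integrable_imp_absolutely_integrable)
    show "kern n \<in> borel_measurable (lebesgue_on {x..})"
      by (rule continuous_imp_measurable_on_sets_lebesgue[OF cont]) auto
    show "(\<lambda>\<xi>. 3 * exp (- a * \<xi>)) integrable_on {x..}"
      using has_integral_cmul[OF exp_minus_a_has_integral, of 3] by (auto simp: integrable_on_def)
    show "norm (kern n \<xi>) \<le> 3 * exp (- a * \<xi>)" if "\<xi> \<in> {x..}" for \<xi>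
    proof -
      have "kern n \<xi> \<le> exp (- a * \<xi>) * (1 + 2 * exp (- \<xi>))"
        using kern_tail_bounds(2)[of \<xi>] that assms by simp
      also have "\<dots> \<le> exp (- a * \<xi>) * 3"
        using that assms by (intro mult_left_mono) auto
      finally show ?thesis using kern_nonneg[of \<xi>] by simp
    qed
  qed auto
  then show ?thesis by (simp add: absolutely_integrable_on_def)
qed

definition F :: "real \<Rightarrow> real" where "F x = integral {0..x} (kern n)"
definition T :: "real \<Rightarrow> real" where "T x = integral {x..} (kern n)"

lemma F_le: assumes "0 \<le> x" shows "F x \<le> x powr b / b"
proof -
  have i: "((\<lambda>\<xi>. \<xi> powr (- a)) has_integral (x powr b / b)) {0..x}"
    using has_integral_powr_from_0[OF _ assms, of "- a"] a_less_1 by (simp add: b_def)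
  show ?thesis unfolding F_def
  proof (rule has_integral_le[OF integrable_integral[OF kern_integrable_on_Icc[OF assms]] i])
    show "kern n \<xi> \<le> \<xi> powr (- a)" if "\<xi> \<in> {0..x}" for \<xi>
      using that kern_le_powr[of \<xi>] by (cases "\<xi> = 0") (auto simp: kern_0)
  qed
qed

lemma F_ge: assumes "0 \<le> x" shows "x powr b / b - a * (x powr (b + 1) / (b + 1)) \<le> F x"
proof -
  have i1: "((\<lambda>\<xi>. \<xi> powr (- a)) has_integral (x powr b / b)) {0..x}"
    using has_integral_powr_from_0[OF _ assms, of "- a"] a_less_1 by (simp add: b_def)
  have i2: "((\<lambda>\<xi>. \<xi> powr b) has_integral (x powr (b + 1) / (b + 1))) {0..x}"
    using has_integral_powr_from_0[OF _ assms, of b] b_pos by simp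
  have i: "((\<lambda>\<xi>. \<xi> powr (- a) - a * \<xi> powr b) has_integral
      (x powr b / b - a * (x powr (b + 1) / (b + 1)))) {0..x}"
    using has_integral_diff[OF i1 has_integral_cmul[OF i2, of a]] by simp
  show ?thesis unfolding F_def
  proof (rule has_integral_le[OF i integrable_integral[OF kern_integrable_on_Icc[OF assms]]])
    show "\<xi> powr (- a) - a * \<xi> powr b \<le> kern n \<xi>" if "\<xi> \<in> {0..x}" for \<xi>
    proof (cases "\<xi> = 0")
      case False
      then have "0 < \<xi>" using that by auto
      moreover from this have "\<xi> powr b = \<xi> powr (- a) * \<xi>"
        using powr_add[of \<xi> "- a" 1] by (simp add: b_def)
      ultimately show ?thesis
        using powr_mult_one_minus_le_kern[of \<xi>] by (simp add: algebra_simps)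
    qed (simp add: kern_0)
  qed
qed

lemma T_bounds:
  assumes "1 \<le> x"
  shows "exp (- a * x) / a \<le> T x" "T x \<le> exp (- a * x) / a * (1 + exp (- x))"
proof -
  show "exp (- a * x) / a \<le> T x" unfolding T_def
    by (rule has_integral_le[OF exp_minus_a_has_integral
          integrable_integral[OF kern_integrable_on_tail[OF assms]]])
       (use kern_tail_bounds(1) assms in auto)
  have i2: "((\<lambda>\<xi>. exp (- (1 + a) * \<xi>)) has_integral exp (- (1 + a) * x) / (1 + a)) {x..}"
    using has_integral_exp_minus_to_infinity[of "1 + a" x] a_pos by simp
  have i: "((\<lambda>\<xi>. exp (- a * \<xi>) + 2 * exp (- (1 + a) * \<xi>)) has_integral
     (exp (- a * x) / a + 2 * exp (- (1 + a) * x) / (1 + a))) {x..}"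
    using has_integral_add[OF exp_minus_a_has_integral has_integral_cmul[OF i2, of 2]] by simp
  have e: "exp (- (1 + a) * \<xi>) = exp (- a * \<xi>) * exp (- \<xi>)" for \<xi>
    by (simp add: exp_add[symmetric] algebra_simps)
  have "T x \<le> exp (- a * x) / a + 2 * exp (- (1 + a) * x) / (1 + a)" unfolding T_def
  proof (rule has_integral_le[OF integrable_integral[OF kern_integrable_on_tail[OF assms]] i])
    show "kern n \<xi> \<le> exp (- a * \<xi>) + 2 * exp (- (1 + a) * \<xi>)" if "\<xi> \<in> {x..}" for \<xi>
      using kern_tail_bounds(2)[of \<xi>] that assms unfolding e by (simp add: algebra_simps)
  qed
  also have "2 * exp (- (1 + a) * x) / (1 + a) \<le> exp (- a * x) * exp (- x) / a"
    unfolding e using a_pos a_less_1 by (simp add: field_simps)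
  finally show "T x \<le> exp (- a * x) / a * (1 + exp (- x))" using a_pos by (simp add: field_simps)
qed

lemma c_const_eq_F_plus_T: assumes "1 \<le> x" shows "c = F x + T x"
proof -
  have "(kern n has_integral (F x + T x)) ({0..x} \<union> {x..})"
    unfolding F_def T_def
    by (rule has_integral_Un[OF integrable_integral[OF kern_integrable_on_Icc]
          integrable_integral[OF kern_integrable_on_tail]]) (use assms in auto)
  moreover have "{0..x} \<union> {x..} = {0::real..}" using assms by auto
  ultimately have "(kern n has_integral (F x + T x)) {0..}" by simp
  then have "(kern n has_integral (F x + T x)) {0<..}"
    by (subst (asm) has_integral_spike_set_eq)
       (auto simp: kern_0 intro: negligible_subset[of "{}"])
  then show ?thesis unfolding c_const_def by (rule integral_unique)
qed

lemma F_has_real_derivative: assumes "0 < x" shows "(F has_real_derivative kern n x) (at x)"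
proof -
  define p q where "p = x / 2" and "q = 2 * x"
  have pq: "0 < p" "p < x" "x < q" using assms by (auto simp: p_def q_def)
  have cont: "continuous_on {p..q} (kern n)"
    using kern_continuous_on by (rule continuous_on_subset) (use pq in auto)
  have "((\<lambda>y. integral {p..y} (kern n)) has_real_derivative kern n x) (at x within {p..q})"
    by (rule integral_has_real_derivative[OF cont]) (use pq in auto)
  then have "((\<lambda>y. F p + integral {p..y} (kern n)) has_real_derivative kern n x) (at x)"
    using at_within_interior[of x "{p..q}"] pq by (auto intro!: derivative_eq_intros)
  then show ?thesis
  proof (rule has_field_derivative_transform_within_open[of _ _ _ "{p<..<q}"])
    show "F p + integral {p..y} (kern n) = F y" if "y \<in> {p<..<q}" for y
      unfolding F_def using that pq
      by (intro Henstock_Kurzweil_Integration.integral_combine[OF _ _ kern_integrable_on_Icc]) auto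
  qed (use pq in auto)
qed

lemma F_continuous_on: "continuous_on {0<..} F"
  using F_has_real_derivative by (intro continuous_at_imp_continuous_on ballI DERIV_isCont) auto

lemma F_strict_mono: assumes "0 < x" "x < y" shows "F x < F y"
proof (rule DERIV_pos_imp_increasing[OF assms(2)])
  fix z assume "x \<le> z" "z \<le> y"
  then have "0 < z" using assms by auto
  then show "\<exists>d. (F has_real_derivative d) (at z) \<and> 0 < d"
    using F_has_real_derivative kern_pos by blast
qed

lemma F_1_pos: "0 < F 1"
proof -
  have "1 / b - a * (1 / (b + 1)) \<le> F 1" using F_ge[of 1] by simp
  moreover have "a * (1 / (b + 1)) < 1" "1 < 1 / b"
    using a_less_1 b_pos a_pos by (auto simp: b_def field_simps)
  ultimately show ?thesis by linarith
qed

lemma F_1_less_c: "F 1 < c"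
proof -
  have "0 < T 1" using T_bounds(1)[of 1] a_pos by (smt (verit) divide_pos_pos exp_gt_zero)
  then show ?thesis using c_const_eq_F_plus_T[of 1] by simp
qed

lemma c_pos: "0 < c"
  using F_1_pos F_1_less_c by linarith

lemma F_surj: assumes "0 < y" "y < c" shows "\<exists>x>0. F x = y"
proof -
  define p where "p = min 1 ((b * y) powr (1 / b))"
  have p: "0 < p" "p \<le> 1" unfolding p_def using assms b_pos by auto
  have "F p \<le> p powr b / b" using F_le p by simp
  also have "\<dots> \<le> ((b * y) powr (1 / b)) powr b / b"
    unfolding p_def using p b_pos by (intro divide_right_mono powr_mono2) auto
  also have "\<dots> = y" using b_pos assms by (simp add: powr_powr)
  finally have "F p \<le> y" .
  define X where "X = max 1 (- ln (a * (c - y) / 2) / a)"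
  have X: "1 \<le> X" unfolding X_def by simp
  have "- ln (a * (c - y) / 2) / a \<le> X" unfolding X_def by (rule max.cobounded2)
  then have "- ln (a * (c - y) / 2) \<le> X * a" by (simp only: pos_divide_le_eq[OF a_pos])
  then have "exp (- a * X) \<le> exp (ln (a * (c - y) / 2))" by (simp add: algebra_simps)
  also have "\<dots> = a * (c - y) / 2" using a_pos assms by simp
  finally have eX: "exp (- a * X) \<le> a * (c - y) / 2" .
  have "T X \<le> exp (- a * X) / a * (1 + exp (- X))" using T_bounds(2)[OF X] .
  also have "\<dots> \<le> exp (- a * X) / a * 2" using X a_pos by (intro mult_left_mono) auto
  also have "\<dots> \<le> c - y" using eX a_pos by (simp add: field_simps)
  finally have "y \<le> F X" using c_const_eq_F_plus_T[OF X] by simp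
  have "\<exists>x. p \<le> x \<and> x \<le> X \<and> F x = y"
    by (rule IVT'[of F p y X, OF \<open>F p \<le> y\<close> \<open>y \<le> F X\<close>])
       (use p X in \<open>auto intro: continuous_on_subset[OF F_continuous_on]\<close>)
  then obtain x where "p \<le> x" "F x = y" by auto
  then show ?thesis using p by (intro exI[of _ x]) auto
qed

definition F_inv :: "real \<Rightarrow> real" where "F_inv y = (THE x. 0 < x \<and> F x = y)"

lemma F_inv_F: assumes "0 < x" shows "F_inv (F x) = x"
  unfolding F_inv_def using assms F_strict_mono
  by (intro the_equality) (auto, metis linorder_neq_iff less_irrefl)

lemma Phi_eq_F_inv: "Phi s = F_inv (c * s)"
  unfolding Phi_inf_def F_inv_def F_def ..

lemma
  assumes "0 < s" "s < 1"
  shows Phi_pos: "0 < Phi s" and F_Phi: "F (Phi s) = c * s"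
proof -
  obtain x where x: "0 < x" "F x = c * s" using F_surj[of "c * s"] assms c_pos by auto
  have "Phi s = x" unfolding Phi_eq_F_inv x(2)[symmetric] using F_inv_F[OF x(1)] .
  then show "0 < Phi s" "F (Phi s) = c * s" using x by auto
qed

lemma F_inv_has_real_derivative:
  assumes "0 < x" shows "(F_inv has_real_derivative inverse (kern n x)) (at (F x))"
  unfolding has_field_derivative_def
  by (rule has_derivative_inverse_strong[of "{0<..}" x F F_inv, OF _ _ F_continuous_on])
     (use assms kern_pos[OF assms] F_inv_F F_has_real_derivative[OF assms]
      in \<open>auto simp: has_field_derivative_def\<close>)

definition dPhi :: "real \<Rightarrow> real" where
  "dPhi s = c * (exp (Phi s) - 1) powr a"
definition ddPhi :: "real \<Rightarrow> real" where
  "ddPhi s = c\<^sup>2 * a * (exp (Phi s) - 1) powr (2 * a - 1) * exp (Phi s)"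

lemma dPhi_pos: assumes "0 < s" "s < 1" shows "0 < dPhi s"
  unfolding dPhi_def using Phi_pos[OF assms] c_pos by simp

lemma ddPhi_pos: assumes "0 < s" "s < 1" shows "0 < ddPhi s"
  unfolding ddPhi_def using Phi_pos[OF assms] c_pos a_pos by simp

lemma Phi_has_real_derivative:
  assumes "0 < s" "s < 1" shows "(Phi has_real_derivative dPhi s) (at s)"
proof -
  have "(F_inv has_real_derivative inverse (kern n (Phi s))) (at (c * s))"
    using F_inv_has_real_derivative[OF Phi_pos[OF assms]] F_Phi[OF assms] by simp
  then have "((\<lambda>s. F_inv (c * s)) has_real_derivative inverse (kern n (Phi s)) * c) (at s)"
    by (rule DERIV_chain2) (auto intro!: derivative_eq_intros)
  moreover have "inverse (kern n (Phi s)) * c = dPhi s"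
    unfolding dPhi_def kern_eq using Phi_pos[OF assms] by (simp add: powr_minus)
  ultimately show ?thesis unfolding Phi_eq_F_inv by simp
qed

lemma dPhi_has_real_derivative:
  assumes "0 < s" "s < 1" shows "(dPhi has_real_derivative ddPhi s) (at s)"
proof -
  let ?y = "exp (Phi s) - 1"
  have y: "0 < ?y" using Phi_pos[OF assms] by simp
  have "((\<lambda>s. exp (Phi s) - 1) has_real_derivative exp (Phi s) * dPhi s) (at s)"
    by (auto intro!: derivative_eq_intros Phi_has_real_derivative[OF assms])
  from DERIV_chain2[OF has_real_derivative_powr[OF y] this]
  have "(dPhi has_real_derivative c * (a * ?y powr (a - 1) * (exp (Phi s) * dPhi s))) (at s)"
    unfolding dPhi_def[abs_def] by (rule DERIV_cmult)
  moreover have "?y powr (a - 1) * ?y powr a = ?y powr (2 * a - 1)"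
    using y by (simp add: powr_add[symmetric])
  then have "c * (a * ?y powr (a - 1) * (exp (Phi s) * dPhi s)) = ddPhi s"
    unfolding dPhi_def ddPhi_def by (simp add: power2_eq_square algebra_simps)
  ultimately show ?thesis by simp
qed

lemma Linf_c1_eq: "0 < s \<Longrightarrow> s < 1 \<Longrightarrow> Linf_c1 n s = (real n - 1) / dPhi s"
  unfolding Linf_c1_def by (simp add: Phi_has_real_derivative[THEN DERIV_imp_deriv])

lemma Linf_c2_eq: assumes "0 < s" "s < 1" shows "Linf_c2 n s = 1 / ddPhi s"
proof -
  have "(deriv Phi has_real_derivative ddPhi s) (at s)"
    by (rule has_field_derivative_transform_within_open[OF dPhi_has_real_derivative[OF assms],
          of "{0<..<1}"])
       (use assms Phi_has_real_derivative[THEN DERIV_imp_deriv] in auto)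
  then show ?thesis unfolding Linf_c2_def by (simp add: DERIV_imp_deriv)
qed

lemma one_minus_eq_T_Phi:
  assumes "0 < s" "s < 1" "1 \<le> Phi s" shows "1 - s = T (Phi s) / c"
  using c_const_eq_F_plus_T[OF assms(3)] F_Phi[OF assms(1,2)] c_pos by (simp add: field_simps)

lemma Linf_coeffs_tail_form:
  assumes "0 < s" "s < 1" "1 \<le> Phi s"
  defines "x \<equiv> Phi s" and "p \<equiv> a * exp (a * Phi s) * T (Phi s)"
  shows "Linf_c2 n s = a * (1 - s)\<^sup>2 * ((1 - exp (- x)) powr (1 - 2 * a) * (1 / p) * (1 / p))"
    and "Linf_c1 n s = a * ((real n - 1) * (1 - s)) * ((1 / (1 - exp (- x))) powr a * (1 / p))"
proof -
  define E w where "E = exp (- x)" and "w = exp (a * x)"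
  have E: "0 < 1 - E" using assms(3) by (simp add: E_def x_def)
  have T: "0 < T x" using T_bounds(1)[OF assms(3)[folded x_def]] a_pos
    by (smt (verit) divide_pos_pos exp_gt_zero)
  have w: "0 < w" by (simp add: w_def)
  have y: "exp x - 1 = exp x * (1 - E)" by (simp add: E_def exp_minus field_simps)
  have eta: "1 - s = T x / c" using one_minus_eq_T_Phi[OF assms(1-3)] by (simp add: x_def)
  have yp: "(exp x - 1) powr r = exp (r * x) * (1 - E) powr r" for r
    unfolding y using E powr_mult[of "exp x" "1 - E" r] by (simp add: powr_def)
  have "ddPhi s = c\<^sup>2 * a * (exp ((2 * a - 1) * x) * exp x) * (1 - E) powr (2 * a - 1)"
    unfolding ddPhi_def x_def[symmetric] yp by simp
  also have "exp ((2 * a - 1) * x) * exp x = w\<^sup>2"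
    by (simp add: w_def power2_eq_square exp_add[symmetric] algebra_simps)
  finally have dd: "ddPhi s = c\<^sup>2 * a * w\<^sup>2 * (1 - E) powr (2 * a - 1)" .
  have "(1 - E) powr (1 - 2 * a) = 1 / (1 - E) powr (2 * a - 1)"
    using powr_minus_divide[of "1 - E" "2 * a - 1"] by simp
  then show "Linf_c2 n s = a * (1 - s)\<^sup>2 * ((1 - exp (- x)) powr (1 - 2 * a) * (1 / p) * (1 / p))"
    unfolding Linf_c2_eq[OF assms(1,2)] dd eta p_def x_def[symmetric] w_def[symmetric] E_def[symmetric]
    using E T w a_pos c_pos by (simp add: power2_eq_square field_simps)
  have "dPhi s = c * w * (1 - E) powr a"
    unfolding dPhi_def x_def[symmetric] yp w_def by simp
  moreover have "(1 / (1 - E)) powr a = 1 / (1 - E) powr a" using E by (simp add: powr_divide)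
  ultimately show "Linf_c1 n s = a * ((real n - 1) * (1 - s)) * ((1 / (1 - exp (- x))) powr a * (1 / p))"
    unfolding Linf_c1_eq[OF assms(1,2)] eta p_def x_def[symmetric] w_def[symmetric] E_def[symmetric]
    using E T w a_pos c_pos by (simp add: field_simps)
qed

lemma tail_normalisation_bounds:
  assumes "1 \<le> x"
  shows "1 \<le> a * exp (a * x) * T x" "a * exp (a * x) * T x \<le> 1 + exp (- x)"
proof -
  have ew: "a * exp (a * x) * (exp (- a * x) / a) = 1" using a_pos by (simp add: exp_minus)
  have "a * exp (a * x) * (exp (- a * x) / a) \<le> a * exp (a * x) * T x"
    using T_bounds(1)[OF assms] a_pos by (intro mult_left_mono) auto
  then show "1 \<le> a * exp (a * x) * T x" using ew by linarith
  have "a * exp (a * x) * T x \<le> a * exp (a * x) * (exp (- a * x) / a * (1 + exp (- x)))"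
    using T_bounds(2)[OF assms] a_pos by (intro mult_left_mono) auto
  also have "\<dots> = 1 + exp (- x)" using ew by (simp only: mult.assoc[symmetric]) simp
  finally show "a * exp (a * x) * T x \<le> 1 + exp (- x)" .
qed

lemma F_1_div_c_less_1: "F 1 / c < 1"
  using F_1_less_c c_pos by simp

text \<open>Since \<open>e^(-ax) \<le> a c (1 - s)\<close>, the error \<open>e^(-x) = (e^(-ax))^(n+1)\<close> is \<open>O((1 - s)^(n+1))\<close>.\<close>
lemma Linf_coeffs_near_one:
  assumes "F 1 / c < s" "s < 1"
  obtains E t where "0 \<le> t" "t \<le> E" "E \<le> 1/2" "E \<le> (a * c) ^ (n + 1) * (1 - s) ^ (n + 1)"
    "Linf_c2 n s = a * (1 - s)\<^sup>2 * ((1 - E) powr (1 - 2 * a) * (1 / (1 + t)) * (1 / (1 + t)))"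
    "Linf_c1 n s = a * ((real n - 1) * (1 - s)) * ((1 / (1 - E)) powr a * (1 / (1 + t)))"
proof -
  have s0: "0 < s" using assms F_1_pos c_pos by (smt (verit) divide_pos_pos)
  define x where "x = Phi s"
  have x: "1 \<le> x"
  proof (rule ccontr)
    assume "\<not> 1 \<le> x"
    then have "F x < F 1" using F_strict_mono Phi_pos[OF s0 assms(2)] by (simp add: x_def)
    then show False using assms F_Phi[OF s0 assms(2)] c_pos by (simp add: x_def field_simps)
  qed
  define t where "t = a * exp (a * x) * T x - 1"
  have t: "0 \<le> t" "t \<le> exp (- x)" using tail_normalisation_bounds[OF x] by (auto simp: t_def)
  have "exp (- x) \<le> exp (-1)" using x by simp
  also have "exp (-1) \<le> (1/2 :: real)"
    using exp_ge_add_one_self[of 1] by (simp add: exp_minus field_simps)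
  finally have E_half: "exp (- x) \<le> 1/2" .
  have "exp (- a * x) \<le> exp (- a * x) * (1 + t)" using t by simp
  also have "\<dots> = a * T x" unfolding t_def by (simp add: exp_minus field_simps)
  also have "\<dots> = a * c * (1 - s)"
    using one_minus_eq_T_Phi[OF s0 assms(2)] x c_pos by (simp add: x_def)
  finally have "exp (- a * x) ^ (n + 1) \<le> (a * c * (1 - s)) ^ (n + 1)" by (intro power_mono) auto
  moreover have "exp (- a * x) ^ (n + 1) = exp (- x)"
  proof -
    have "exp (- a * x) ^ (n + 1) = exp (real (n + 1) * (- a * x))" by (simp only: exp_of_nat_mult)
    also have "real (n + 1) * (- a * x) = - ((real n + 1) * a * x)" by (simp add: algebra_simps)
    finally show ?thesis using n_plus_1_mult_a by simp
  qed
  ultimately have "exp (- x) \<le> (a * c * (1 - s)) ^ (n + 1)" by simp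
  then have "exp (- x) \<le> (a * c) ^ (n + 1) * (1 - s) ^ (n + 1)" by (simp only: power_mult_distrib)
  moreover have "1 + t = a * exp (a * x) * T x" by (simp add: t_def)
  ultimately show ?thesis
    using that[of t "exp (- x)"] t E_half Linf_coeffs_tail_form[OF s0 assms(2) x[unfolded x_def]]
    by (simp add: x_def)
qed

lemma Linf_c2_near_one:
  "\<exists>h. h \<in> O[at_left 1](\<lambda>s. (1 - s) ^ (n + 1)) \<and>
     (\<forall>\<^sub>F s in at_left 1. Linf_c2 n s = 1 / (real n + 1) * Lplus_c2 n (1 - s) * (1 + h s))"
proof (rule exists_bigo_relative_error[where K = "7 * (a * c) ^ (n + 1)"])
  show "\<forall>\<^sub>F s in at_left 1. \<exists>r. Linf_c2 n s = 1 / (real n + 1) * Lplus_c2 n (1 - s) * (1 + r) \<and>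
      \<bar>r\<bar> \<le> 7 * (a * c) ^ (n + 1) * \<bar>(1 - s) ^ (n + 1)\<bar>"
    using eventually_at_left_real[OF F_1_div_c_less_1]
  proof (rule eventually_mono)
    fix s assume "s \<in> {F 1 / c<..<1}"
    then have s: "F 1 / c < s" "s < 1" by auto
    then obtain E t where Et: "0 \<le> t" "t \<le> E" "E \<le> 1/2" "E \<le> (a * c) ^ (n + 1) * (1 - s) ^ (n + 1)"
      and L: "Linf_c2 n s = a * (1 - s)\<^sup>2 * ((1 - E) powr (1 - 2 * a) * (1 / (1 + t)) * (1 / (1 + t)))"
      and "Linf_c1 n s = a * ((real n - 1) * (1 - s)) * ((1 / (1 - E)) powr a * (1 / (1 + t)))"
      by (rule Linf_coeffs_near_one)
    let ?R = "(1 - E) powr (1 - 2 * a) * (1 / (1 + t)) * (1 / (1 + t))"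
    have "\<bar>(1 - E) powr (1 - 2 * a) - 1\<bar> \<le> 1 * E"
      using abs_powr_sub_one_le[of "1 - E" "1 - 2 * a"] Et a_pos a_le_half by simp
    moreover have inv: "\<bar>1 / (1 + t) - 1\<bar> \<le> 1 * E"
      using abs_inverse_one_plus_sub_one_le[of t] Et by simp
    ultimately have "\<bar>(1 - E) powr (1 - 2 * a) * (1 / (1 + t)) - 1\<bar> \<le> (1 + 1 + 1 * 1) * E"
      by (rule abs_mult_sub_one_le) (use Et in auto)
    then have "\<bar>?R - 1\<bar> \<le> ((1 + 1 + 1 * 1) + 1 + (1 + 1 + 1 * 1) * 1) * E"
      by (rule abs_mult_sub_one_le[OF _ inv]) (use Et in auto)
    then show "\<exists>r. Linf_c2 n s = 1 / (real n + 1) * Lplus_c2 n (1 - s) * (1 + r) \<and>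
        \<bar>r\<bar> \<le> 7 * (a * c) ^ (n + 1) * \<bar>(1 - s) ^ (n + 1)\<bar>"
      using L Et s by (intro exI[of _ "?R - 1"]) (auto simp: Lplus_c2_def a_def)
  qed
qed

lemma Linf_c1_near_one:
  "\<exists>h. h \<in> O[at_left 1](\<lambda>s. (1 - s) ^ (n + 1)) \<and>
     (\<forall>\<^sub>F s in at_left 1. - Linf_c1 n s = 1 / (real n + 1) * Lplus_c1 n (1 - s) * (1 + h s))"
proof (rule exists_bigo_relative_error[where K = "5 * (a * c) ^ (n + 1)"])
  show "\<forall>\<^sub>F s in at_left 1. \<exists>r. - Linf_c1 n s = 1 / (real n + 1) * Lplus_c1 n (1 - s) * (1 + r) \<and>
      \<bar>r\<bar> \<le> 5 * (a * c) ^ (n + 1) * \<bar>(1 - s) ^ (n + 1)\<bar>"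
    using eventually_at_left_real[OF F_1_div_c_less_1]
  proof (rule eventually_mono)
    fix s assume "s \<in> {F 1 / c<..<1}"
    then have s: "F 1 / c < s" "s < 1" by auto
    then obtain E t where Et: "0 \<le> t" "t \<le> E" "E \<le> 1/2" "E \<le> (a * c) ^ (n + 1) * (1 - s) ^ (n + 1)"
      and "Linf_c2 n s = a * (1 - s)\<^sup>2 * ((1 - E) powr (1 - 2 * a) * (1 / (1 + t)) * (1 / (1 + t)))"
      and L: "Linf_c1 n s = a * ((real n - 1) * (1 - s)) * ((1 / (1 - E)) powr a * (1 / (1 + t)))"
      by (rule Linf_coeffs_near_one)
    let ?R = "(1 / (1 - E)) powr a * (1 / (1 + t))"
    have "\<bar>(1 / (1 - E)) powr a - 1\<bar> \<le> 2 * E"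
      using abs_powr_sub_one_le[of "1 / (1 - E)" a] abs_inverse_one_minus_sub_one_le[of E]
        Et a_pos a_less_1 by simp
    moreover have "\<bar>1 / (1 + t) - 1\<bar> \<le> 1 * E"
      using abs_inverse_one_plus_sub_one_le[of t] Et by simp
    ultimately have "\<bar>?R - 1\<bar> \<le> (2 + 1 + 2 * 1) * E"
      by (rule abs_mult_sub_one_le) (use Et in auto)
    moreover have "- Linf_c1 n s = 1 / (real n + 1) * Lplus_c1 n (1 - s) * ?R"
      unfolding L Lplus_c1_def a_def by (simp del: minus_diff_eq)
    moreover have "E \<le> (a * c) ^ (n + 1) * \<bar>(1 - s) ^ (n + 1)\<bar>" using Et s by simp
    ultimately show "\<exists>r. - Linf_c1 n s = 1 / (real n + 1) * Lplus_c1 n (1 - s) * (1 + r) \<and>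
        \<bar>r\<bar> \<le> 5 * (a * c) ^ (n + 1) * \<bar>(1 - s) ^ (n + 1)\<bar>"
      by (intro exI[of _ "?R - 1"]) auto
  qed
qed

lemma d_const_eq: "d_const n = b powr (1 / real n) * c powr (1 + 1 / real n)"
proof -
  have "real n / (real n + 1) = b" "(real n + 1) / real n = 1 + 1 / real n"
    using n_pos by (auto simp: b_def a_def field_simps)
  then show ?thesis unfolding d_const_def by simp
qed

lemma d_const_pos: "0 < d_const n"
  unfolding d_const_eq using b_pos c_pos by simp

text \<open>Both identities are checked on logarithms, where they become linear relations between
  \<open>ln c\<close>, \<open>ln x\<close>, \<open>ln (e^x - 1)\<close> and \<open>ln q\<close>.\<close>
lemma Linf_coeffs_head_form:
  assumes "0 < s" "s < 1"
  defines "x \<equiv> Phi s" and "q \<equiv> b * c * s / Phi s powr b"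
  shows "Linf_c2 n s = 1 / d_const n * Lminus_c2 n s *
           (((exp x - 1) / x) powr (1 - 2 * a) * exp (- x) * (1 / q) powr ((real n - 1) / real n))"
    and "Linf_c1 n s = 1 / d_const n * Lminus_c1 n s * ((x / (exp x - 1)) powr a * q powr (1 / real n))"
proof -
  define y k where "y = exp x - 1" and "k = 1 / real n"
  have x: "0 < x" using Phi_pos[OF assms(1,2)] by (simp add: x_def)
  have y: "0 < y" using x by (simp add: y_def)
  have q: "0 < q" using x assms(1) b_pos c_pos by (simp add: q_def x_def[symmetric])
  have n: "0 < real n" using n_pos by simp
  have rel: "real n * k = 1" "b = real n * a" "a * (real n + 1) = 1"
    using n b_eq n_plus_1_mult_a by (auto simp: k_def algebra_simps)
  have exps: "(real n - 1) / real n = 1 - k" "- 1 / real n = - k"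
    using n by (auto simp: k_def field_simps)
  have "s = q * x powr b / (b * c)"
    using x b_pos c_pos by (simp add: q_def x_def[symmetric] field_simps)
  then have ln_s: "ln s = ln q + b * ln x - ln b - ln c"
    using x q b_pos c_pos by (simp add: ln_mult ln_div ln_powr)
  have ln_b: "ln b = ln (real n) + ln a" using rel(2) n a_pos by (simp add: ln_mult)
  have ln_d: "ln (d_const n) = k * ln b + (1 + k) * ln c"
    unfolding d_const_eq k_def using b_pos c_pos by (simp add: ln_mult ln_powr)
  have d: "0 < d_const n" by (rule d_const_pos)
  let ?R2 = "(y / x) powr (1 - 2 * a) * exp (- x) * (1 / q) powr (1 - k)"
  have "ln (1 / d_const n * (real n * s powr (1 - k)) * ?R2)
      = - ln (d_const n) + ln (real n) + (1 - k) * ln s + (1 - 2 * a) * (ln y - ln x) - x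
        - (1 - k) * ln q"
    using d n assms(1) x y q by (simp add: ln_mult ln_div ln_powr)
  also have "\<dots> = - (2 * ln c + ln a + (2 * a - 1) * ln y + x)"
    unfolding ln_d ln_s ln_b using rel by algebra
  also have "\<dots> = ln (1 / ddPhi s)"
    unfolding ddPhi_def x_def[symmetric] y_def[symmetric]
    using c_pos a_pos y by (simp add: ln_mult ln_div ln_powr ln_realpow)
  finally have "1 / d_const n * (real n * s powr (1 - k)) * ?R2 = 1 / ddPhi s"
    by (subst (asm) ln_inj_iff) (use d n assms(1) x y q ddPhi_pos[OF assms(1,2)] in auto)
  then show "Linf_c2 n s = 1 / d_const n * Lminus_c2 n s *
           (((exp x - 1) / x) powr (1 - 2 * a) * exp (- x) * (1 / q) powr ((real n - 1) / real n))"
    unfolding Linf_c2_eq[OF assms(1,2)] Lminus_c2_def exps y_def[symmetric] by simp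
  let ?R1 = "(x / y) powr a * q powr k"
  have "ln (1 / d_const n * s powr (- k) * ?R1)
      = - ln (d_const n) - k * ln s + a * (ln x - ln y) + k * ln q"
    using d assms(1) x y q by (simp add: ln_mult ln_div ln_powr)
  also have "\<dots> = - (ln c + a * ln y)"
    unfolding ln_d ln_s ln_b using rel by algebra
  also have "\<dots> = ln (1 / dPhi s)"
    unfolding dPhi_def x_def[symmetric] y_def[symmetric]
    using c_pos y by (simp add: ln_mult ln_div ln_powr)
  finally have "1 / d_const n * s powr (- k) * ?R1 = 1 / dPhi s"
    by (subst (asm) ln_inj_iff) (use d assms(1) x y q dPhi_pos[OF assms(1,2)] in auto)
  then have "(real n - 1) / dPhi s = (real n - 1) * (1 / d_const n * s powr (- k) * ?R1)" by simp
  then show "Linf_c1 n s = 1 / d_const n * Lminus_c1 n s * ((x / (exp x - 1)) powr a * q powr (1 / real n))"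
    unfolding Linf_c1_eq[OF assms(1,2)] Lminus_c1_def exps y_def[symmetric] k_def[symmetric]
    by (simp only: mult_ac)
qed

lemma head_normalisation_bounds:
  assumes "0 < x"
  shows "1 - x / 2 \<le> b * F x / x powr b" "b * F x / x powr b \<le> 1"
proof -
  have xb: "0 < x powr b" using assms by simp
  show "b * F x / x powr b \<le> 1" using F_le[of x] assms xb b_pos by (simp add: field_simps)
  have "a * b / (b + 1) \<le> a" using a_pos b_pos by (simp add: field_simps)
  then have "a * b / (b + 1) \<le> 1 / 2" using a_le_half by linarith
  then have "a * b / (b + 1) * x \<le> 1 / 2 * x" using assms by (intro mult_right_mono) auto
  then have "x powr b * (1 - x / 2) \<le> x powr b * (1 - a * b / (b + 1) * x)"
    using xb by (intro mult_left_mono) auto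
  also have "\<dots> = b * (x powr b / b - a * (x powr (b + 1) / (b + 1)))"
    using assms b_pos by (simp add: powr_add algebra_simps)
  also have "\<dots> \<le> b * F x" using F_ge[of x] assms b_pos by (intro mult_left_mono) auto
  finally show "1 - x / 2 \<le> b * F x / x powr b" using xb by (simp add: le_divide_eq mult.commute)
qed

text \<open>From \<open>c s = F x \<ge> x^b / (2 b)\<close> one gets \<open>x \<le> (2 b c s)^(1/b)\<close>, and \<open>1/b = (n+1)/n\<close>.\<close>
lemma Linf_coeffs_near_zero:
  assumes "0 < s" "s < F 1 / c" "s < (1/2) powr b / (2 * b * c)"
  obtains x q where "0 < x" "x \<le> 1/2" "x \<le> (2 * b * c) powr (1 / b) * s powr ((real n + 1) / real n)"
    "1 - x / 2 \<le> q" "q \<le> 1"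
    "Linf_c2 n s = 1 / d_const n * Lminus_c2 n s *
       (((exp x - 1) / x) powr (1 - 2 * a) * exp (- x) * (1 / q) powr ((real n - 1) / real n))"
    "Linf_c1 n s = 1 / d_const n * Lminus_c1 n s * ((x / (exp x - 1)) powr a * q powr (1 / real n))"
proof -
  have s1: "s < 1" using assms(2) F_1_div_c_less_1 by linarith
  define x where "x = Phi s"
  have x: "0 < x" and Fx: "F x = c * s" using Phi_pos F_Phi assms(1) s1 by (auto simp: x_def)
  have x1: "x < 1"
  proof (rule ccontr)
    assume "\<not> x < 1"
    then have "F 1 \<le> F x" using F_strict_mono[of 1 x] by (cases "x = 1") auto
    then show False using assms(2) Fx c_pos by (simp add: field_simps)
  qed
  define q where "q = b * c * s / x powr b"
  have q: "1 - x / 2 \<le> q" "q \<le> 1"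
    using head_normalisation_bounds[OF x] Fx by (simp_all add: q_def mult.assoc)
  have xb: "0 < x powr b" using x by simp
  have "x powr b * (1/2) \<le> x powr b * q" using q x1 xb by (intro mult_left_mono) auto
  then have xb_le: "x powr b \<le> 2 * b * c * s"
    using xb b_pos by (simp add: q_def field_simps)
  have "x \<le> 1/2"
  proof (rule ccontr)
    assume "\<not> x \<le> 1/2"
    then have "(1/2) powr b \<le> x powr b" using b_pos by (intro powr_mono2) auto
    then show False using xb_le assms(3) b_pos c_pos by (simp add: field_simps)
  qed
  moreover have "x \<le> (2 * b * c) powr (1 / b) * s powr ((real n + 1) / real n)"
  proof -
    have "x = (x powr b) powr (1 / b)" using x b_pos by (simp add: powr_powr)
    also have "\<dots> \<le> (2 * b * c * s) powr (1 / b)" using xb_le xb b_pos by (intro powr_mono2) auto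
    also have "\<dots> = (2 * b * c) powr (1 / b) * s powr (1 / b)"
      using b_pos c_pos assms by (simp add: powr_mult)
    also have "s powr (1 / b) = s powr ((real n + 1) / real n)"
      using n_pos by (simp add: b_def a_def field_simps)
    finally show ?thesis .
  qed
  ultimately show ?thesis
    using that[of x q] x q Linf_coeffs_head_form[OF assms(1) s1] by (simp add: x_def q_def)
qed

lemma near_zero_threshold_pos: "0 < min (F 1 / c) ((1/2) powr b / (2 * b * c))"
  using F_1_pos c_pos b_pos by simp

lemma Linf_c2_near_zero:
  "\<exists>h. h \<in> O[at_right 0](\<lambda>s. s powr ((real n + 1) / real n)) \<and>
     (\<forall>\<^sub>F s in at_right 0. Linf_c2 n s = 1 / d_const n * Lminus_c2 n s * (1 + h s))"
proof (rule exists_bigo_relative_error[where K = "11 * (2 * b * c) powr (1 / b)"])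
  show "\<forall>\<^sub>F s in at_right 0. \<exists>r. Linf_c2 n s = 1 / d_const n * Lminus_c2 n s * (1 + r) \<and>
      \<bar>r\<bar> \<le> 11 * (2 * b * c) powr (1 / b) * \<bar>s powr ((real n + 1) / real n)\<bar>"
    using eventually_at_right_real[OF near_zero_threshold_pos]
  proof (rule eventually_mono)
    fix s assume "s \<in> {0<..<min (F 1 / c) ((1/2) powr b / (2 * b * c))}"
    then have s: "0 < s" "s < F 1 / c" "s < (1/2) powr b / (2 * b * c)" by auto
    then obtain x q where xq: "0 < x" "x \<le> 1/2"
        "x \<le> (2 * b * c) powr (1 / b) * s powr ((real n + 1) / real n)" "1 - x / 2 \<le> q" "q \<le> 1"
      and L: "Linf_c2 n s = 1 / d_const n * Lminus_c2 n s *
         (((exp x - 1) / x) powr (1 - 2 * a) * exp (- x) * (1 / q) powr ((real n - 1) / real n))"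
      and "Linf_c1 n s = 1 / d_const n * Lminus_c1 n s * ((x / (exp x - 1)) powr a * q powr (1 / real n))"
      by (rule Linf_coeffs_near_zero)
    let ?A = "((exp x - 1) / x) powr (1 - 2 * a)" and ?C = "(1 / q) powr ((real n - 1) / real n)"
    have A: "\<bar>?A - 1\<bar> \<le> 2 * x"
      using abs_powr_sub_one_le[of "(exp x - 1) / x" "1 - 2 * a"] exp_minus_one_div_bounds[OF xq(1,2)]
        a_pos a_le_half by simp
    have "\<bar>1 / (1 - (1 - q)) - 1\<bar> \<le> 2 * (1 - q)"
      using xq by (intro abs_inverse_one_minus_sub_one_le) auto
    then have C: "\<bar>?C - 1\<bar> \<le> 1 * x"
      using abs_powr_sub_one_le[of "1 / q" "(real n - 1) / real n"] xq n_pos by simp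
    have "\<bar>?A * exp (- x) - 1\<bar> \<le> (2 + 1 + 2 * 1) * x"
      by (rule abs_mult_sub_one_le[OF A]) (use abs_exp_minus_sub_one_le[of x] xq in auto)
    then have R: "\<bar>?A * exp (- x) * ?C - 1\<bar> \<le> ((2 + 1 + 2 * 1) + 1 + (2 + 1 + 2 * 1) * 1) * x"
      by (rule abs_mult_sub_one_le[OF _ C]) (use xq in auto)
    show "\<exists>r. Linf_c2 n s = 1 / d_const n * Lminus_c2 n s * (1 + r) \<and>
        \<bar>r\<bar> \<le> 11 * (2 * b * c) powr (1 / b) * \<bar>s powr ((real n + 1) / real n)\<bar>"
      using L R xq by (intro exI[of _ "?A * exp (- x) * ?C - 1"]) auto
  qed
qed

lemma Linf_c1_near_zero:
  "\<exists>h. h \<in> O[at_right 0](\<lambda>s. s powr ((real n + 1) / real n)) \<and>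
     (\<forall>\<^sub>F s in at_right 0. Linf_c1 n s = 1 / d_const n * Lminus_c1 n s * (1 + h s))"
proof (rule exists_bigo_relative_error[where K = "5 * (2 * b * c) powr (1 / b)"])
  show "\<forall>\<^sub>F s in at_right 0. \<exists>r. Linf_c1 n s = 1 / d_const n * Lminus_c1 n s * (1 + r) \<and>
      \<bar>r\<bar> \<le> 5 * (2 * b * c) powr (1 / b) * \<bar>s powr ((real n + 1) / real n)\<bar>"
    using eventually_at_right_real[OF near_zero_threshold_pos]
  proof (rule eventually_mono)
    fix s assume "s \<in> {0<..<min (F 1 / c) ((1/2) powr b / (2 * b * c))}"
    then have s: "0 < s" "s < F 1 / c" "s < (1/2) powr b / (2 * b * c)" by auto
    then obtain x q where xq: "0 < x" "x \<le> 1/2"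
        "x \<le> (2 * b * c) powr (1 / b) * s powr ((real n + 1) / real n)" "1 - x / 2 \<le> q" "q \<le> 1"
      and "Linf_c2 n s = 1 / d_const n * Lminus_c2 n s *
         (((exp x - 1) / x) powr (1 - 2 * a) * exp (- x) * (1 / q) powr ((real n - 1) / real n))"
      and L: "Linf_c1 n s = 1 / d_const n * Lminus_c1 n s * ((x / (exp x - 1)) powr a * q powr (1 / real n))"
      by (rule Linf_coeffs_near_zero)
    let ?A = "(x / (exp x - 1)) powr a" and ?B = "q powr (1 / real n)"
    define t where "t = (exp x - 1) / x - 1"
    have t: "0 \<le> t" "t \<le> 2 * x" using exp_minus_one_div_bounds[OF xq(1,2)] by (auto simp: t_def)
    have "x / (exp x - 1) = 1 / (1 + t)" using xq(1) by (simp add: t_def)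
    then have A: "\<bar>?A - 1\<bar> \<le> 2 * x"
      using abs_powr_sub_one_le[of "x / (exp x - 1)" a] abs_inverse_one_plus_sub_one_le[OF t(1)]
        t xq(1) a_pos a_less_1 by simp
    have B: "\<bar>?B - 1\<bar> \<le> 1 * x"
      using abs_powr_sub_one_le[of q "1 / real n"] xq n_pos by simp
    have R: "\<bar>?A * ?B - 1\<bar> \<le> (2 + 1 + 2 * 1) * x"
      by (rule abs_mult_sub_one_le[OF A B]) (use xq in auto)
    show "\<exists>r. Linf_c1 n s = 1 / d_const n * Lminus_c1 n s * (1 + r) \<and>
        \<bar>r\<bar> \<le> 5 * (2 * b * c) powr (1 / b) * \<bar>s powr ((real n + 1) / real n)\<bar>"
      using L R xq by (intro exI[of _ "?A * ?B - 1"]) auto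
  qed
qed

end

theorem lemma4p2:
  fixes n :: nat
  assumes "n \<ge> 2"
  shows
    \<comment> \<open>near eta = 1 - s -> 0+ (s -> 1-); in the variable eta, d/ds = - d/deta, d2/ds2 = d2/deta2\<close>
    "(\<forall>s. Linf_c0 n s = (1 / (real n + 1)) * Lplus_c0 n (1 - s))
   \<and> (\<exists>h. h \<in> O[at_left 1](\<lambda>s. (1 - s) ^ (n + 1)) \<and>
          (\<forall>\<^sub>F s in at_left 1. Linf_c2 n s = (1 / (real n + 1)) * Lplus_c2 n (1 - s) * (1 + h s)))
   \<and> (\<exists>h. h \<in> O[at_left 1](\<lambda>s. (1 - s) ^ (n + 1)) \<and>
          (\<forall>\<^sub>F s in at_left 1. - Linf_c1 n s = (1 / (real n + 1)) * Lplus_c1 n (1 - s) * (1 + h s)))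
   \<and> (\<forall>s. Linf_c0 n s = (1 / d_const n) * Lminus_c0 n s)
   \<and> (\<exists>h. h \<in> O[at_right 0](\<lambda>s. s powr ((real n + 1) / real n)) \<and>
          (\<forall>\<^sub>F s in at_right 0. Linf_c2 n s = (1 / d_const n) * Lminus_c2 n s * (1 + h s)))
   \<and> (\<exists>h. h \<in> O[at_right 0](\<lambda>s. s powr ((real n + 1) / real n)) \<and>
          (\<forall>\<^sub>F s in at_right 0. Linf_c1 n s = (1 / d_const n) * Lminus_c1 n s * (1 + h s)))"
proof -
  interpret neck_profile n using assms by unfold_locales simp
  have "real n + 1 \<noteq> 0" using of_nat_0_le_iff[of n] by linarith
  then have "Linf_c0 n s = 1 / (real n + 1) * Lplus_c0 n (1 - s)" for s
    by (simp add: Linf_c0_def Lplus_c0_def field_simps)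
  moreover have "Linf_c0 n s = 1 / d_const n * Lminus_c0 n s" for s
    using d_const_pos by (simp add: Linf_c0_def Lminus_c0_def)
  ultimately show ?thesis
    using Linf_c2_near_one Linf_c1_near_one Linf_c2_near_zero Linf_c1_near_zero by blast
qed

end
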